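(* Let $K_t(\omega)$ be a weighted complete graph on $[t]$. Suppose $K_t(\omega)$ contains $\ell_1$ copies of $C_8$, $\ell_2$ copies of $K_5$, $\ell_3$ copies of $C_5$, $\ell_4$ copies of $K_4$, $\ell_5$ copies of $C_4$, $\ell_6$ copies of $K_3$ and $\ell_7$ single edges, such that all these subgraphs are pairwise vertex-disjoint and each of them is half (every edge of each of these subgraphs has weight $\frac12$). Then $$2g(K_t(\omega))\le 1-\frac{30}{30t-120\ell_1-100\ell_2-75\ell_3-72\ell_4-60\ell_5-45\ell_6-20\ell_7}.$$
   Context: A weighted complete graph $K_t(\omega)$ is the complete graph on vertex set $[t]$ in which every edge $ij$ has a weight $\omega(i,j)\in\{\frac12,1\}$; an edge is called half if its weight is $\frac12$ and full if its weight is $1$, and a subgraph is half if all its edges are half. Its edge density is $g(K_t(\omega))=\max_{\mathbf u}\sum_{1\le i<j\le t}\omega(i,j)u_iu_j$, the maximum taken over all $\mathbf u=(u_1,\dots,u_t)$ with $u_i\ge 0$ and $\sum_i u_i=1$. *)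

theory Defs
  imports Complex_Main
begin

definition weighted_complete :: "nat \<Rightarrow> (nat \<Rightarrow> nat \<Rightarrow> real) \<Rightarrow> bool" where
  "weighted_complete t \<omega> \<longleftrightarrow>
     (\<forall>i\<in>{1..t}. \<forall>j\<in>{1..t}. i \<noteq> j \<longrightarrow> \<omega> i j \<in> {1/2, 1} \<and> \<omega> i j = \<omega> j i)"

definition half_edge :: "(nat \<Rightarrow> nat \<Rightarrow> real) \<Rightarrow> nat \<Rightarrow> nat \<Rightarrow> bool" where
  "half_edge \<omega> i j \<longleftrightarrow> \<omega> i j = 1/2"

definition simplex :: "nat \<Rightarrow> (nat \<Rightarrow> real) set" where
  "simplex t = {u. (\<forall>i\<in>{1..t}. 0 \<le> u i) \<and> (\<Sum>i\<in>{1..t}. u i) = 1}"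

definition edge_poly :: "nat \<Rightarrow> (nat \<Rightarrow> nat \<Rightarrow> real) \<Rightarrow> (nat \<Rightarrow> real) \<Rightarrow> real" where
  "edge_poly t \<omega> u = (\<Sum>i\<in>{1..t}. \<Sum>j\<in>{i+1..t}. \<omega> i j * u i * u j)"

text \<open>Edge density g(K_t(\<omega>)): the maximum (attained, the simplex being compact) of the edge polynomial.\<close>
definition edge_density :: "nat \<Rightarrow> (nat \<Rightarrow> nat \<Rightarrow> real) \<Rightarrow> real" where
  "edge_density t \<omega> = Sup (edge_poly t \<omega> ` simplex t)"

definition half_cycle :: "nat \<Rightarrow> (nat \<Rightarrow> nat \<Rightarrow> real) \<Rightarrow> nat \<Rightarrow> nat list \<Rightarrow> bool" where
  "half_cycle t \<omega> k vs \<longleftrightarrow> length vs = k \<and> distinct vs \<and> set vs \<subseteq> {1..t} \<and>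
     (\<forall>i<k. half_edge \<omega> (vs ! i) (vs ! ((i + 1) mod k)))"

definition half_clique :: "nat \<Rightarrow> (nat \<Rightarrow> nat \<Rightarrow> real) \<Rightarrow> nat \<Rightarrow> nat set \<Rightarrow> bool" where
  "half_clique t \<omega> k S \<longleftrightarrow> card S = k \<and> S \<subseteq> {1..t} \<and>
     (\<forall>i\<in>S. \<forall>j\<in>S. i \<noteq> j \<longrightarrow> half_edge \<omega> i j)"

end

theory Submission
  imports Defs "HOL-Library.Disjoint_Sets"
begin

text \<open>Let \<open>M\<close> be the matrix with \<open>1\<close> on the diagonal and \<open>1 - \<omega>(a,b)\<close> off it. On the simplex,
  \<open>u\<^sup>T M u = 1 - 2 p(u)\<close>, where \<open>p\<close> is the edge polynomial, and \<open>M\<close> is entrywise nonnegative.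
  Restricted to the vertices of a half \<open>C\<^sub>k\<close> the form dominates
  \<open>\<Sum> u\<^sub>m\<^sup>2 + \<Sum> u\<^sub>m u\<^sub>m\<^sub>+\<^sub>1 = \<onehalf> \<Sum> (u\<^sub>m + u\<^sub>m\<^sub>+\<^sub>1)\<^sup>2 \<ge> (\<Sum> u)\<^sup>2 / (k/2)\<close>; restricted to a
  half \<open>K\<^sub>k\<close> it equals \<open>\<onehalf> ((\<Sum> u)\<^sup>2 + \<Sum> u\<^sup>2) \<ge> (\<Sum> u)\<^sup>2 / (2k/(k+1))\<close>; a single vertex
  gives \<open>u\<^sub>a\<^sup>2\<close>. Dropping the cross terms between disjoint blocks and applying the Engel form of
  Cauchy-Schwarz, \<open>(\<Sum> s\<^sub>i)\<^sup>2 / \<Sum> w\<^sub>i \<le> \<Sum> s\<^sub>i\<^sup>2 / w\<^sub>i\<close>, gives \<open>1 - 2 p(u) \<ge> 1 / \<Sum> w\<^sub>i\<close>, and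
  \<open>\<Sum> w\<^sub>i = t - \<Sum> (|B| - w\<^sub>B)\<close> is the denominator of the theorem divided by 30.\<close>

definition quad_form :: "('a \<Rightarrow> 'a \<Rightarrow> real) \<Rightarrow> 'a set \<Rightarrow> ('a \<Rightarrow> real) \<Rightarrow> real" where
  "quad_form M S u = (\<Sum>a\<in>S. \<Sum>b\<in>S. M a b * u a * u b)"

lemma titu_inequality:
  fixes s w :: "'i \<Rightarrow> real"
  assumes "finite I" and w_nonneg: "\<And>i. i \<in> I \<Longrightarrow> 0 \<le> w i"
    and s_zero: "\<And>i. i \<in> I \<Longrightarrow> w i = 0 \<Longrightarrow> s i = 0"
  shows "(\<Sum>i\<in>I. s i)\<^sup>2 / (\<Sum>i\<in>I. w i) \<le> (\<Sum>i\<in>I. (s i)\<^sup>2 / w i)"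
proof (cases "(\<Sum>i\<in>I. w i) = 0")
  case True
  then show ?thesis by (simp add: sum_nonneg w_nonneg)
next
  case False
  define S W where "S = (\<Sum>i\<in>I. s i)" and "W = (\<Sum>i\<in>I. w i)"
  have "W > 0" using False w_nonneg by (simp add: W_def order_less_le sum_nonneg)
  define l where "l = S / W"
  have tangent: "2 * l * s i - l\<^sup>2 * w i \<le> (s i)\<^sup>2 / w i" if "i \<in> I" for i
  proof (cases "w i = 0")
    case True
    then show ?thesis using s_zero that by simp
  next
    case False
    then have "w i > 0" using w_nonneg that by (simp add: order_less_le)
    then have "0 \<le> (s i - l * w i)\<^sup>2 / w i" by simp
    also have "\<dots> = (s i)\<^sup>2 / w i - (2 * l * s i - l\<^sup>2 * w i)"
      using \<open>w i > 0\<close> by (simp add: field_simps power2_eq_square)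
    finally show ?thesis by simp
  qed
  have "S\<^sup>2 / W = 2 * l * S - l\<^sup>2 * W"
    using \<open>W > 0\<close> by (simp add: l_def field_simps power2_eq_square)
  also have "\<dots> = (\<Sum>i\<in>I. 2 * l * s i - l\<^sup>2 * w i)"
    by (simp add: S_def W_def sum_subtractf sum_distrib_left)
  also have "\<dots> \<le> (\<Sum>i\<in>I. (s i)\<^sup>2 / w i)"
    by (rule sum_mono) (rule tangent)
  finally show ?thesis by (simp add: S_def W_def)
qed

lemma quad_form_clique_ge:
  fixes M :: "'a \<Rightarrow> 'a \<Rightarrow> real"
  assumes "finite S"
    and diag: "\<And>a. a \<in> S \<Longrightarrow> M a a = 1"
    and off_diag: "\<And>a b. a \<in> S \<Longrightarrow> b \<in> S \<Longrightarrow> a \<noteq> b \<Longrightarrow> M a b = 1/2"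
  shows "(\<Sum>a\<in>S. u a)\<^sup>2 / (2 * real (card S) / (real (card S) + 1)) \<le> quad_form M S u"
proof -
  have "quad_form M S u = (\<Sum>a\<in>S. \<Sum>b\<in>S. u a * u b / 2 + (if a = b then (u a)\<^sup>2 / 2 else 0))"
    unfolding quad_form_def
    by (intro sum.cong refl) (auto simp: diag off_diag power2_eq_square)
  also have "\<dots> = (\<Sum>a\<in>S. u a)\<^sup>2 / 2 + (\<Sum>a\<in>S. (u a)\<^sup>2) / 2"
    using \<open>finite S\<close>
    by (simp add: sum.distrib sum_divide_distrib sum_product power2_eq_square)
  finally have q: "quad_form M S u = (\<Sum>a\<in>S. u a)\<^sup>2 / 2 + (\<Sum>a\<in>S. (u a)\<^sup>2) / 2" .
  have "(\<Sum>a\<in>S. u a)\<^sup>2 / real (card S) \<le> (\<Sum>a\<in>S. (u a)\<^sup>2)"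
    using titu_inequality[of S "\<lambda>_. 1" u] \<open>finite S\<close> by simp
  then show ?thesis
    unfolding q by (cases "card S = 0") (simp_all add: field_simps)
qed

lemma sum_lessThan_rotate:
  fixes k :: nat
  assumes "0 < k"
  shows "(\<Sum>m<k. h ((m + 1) mod k)) = (\<Sum>m<k. h m :: 'b :: comm_monoid_add)"
proof -
  obtain n where k: "k = Suc n" using assms by (cases k) auto
  have "(\<Sum>m<Suc n. h ((m + 1) mod Suc n)) = h 0 + (\<Sum>m<n. h (Suc m))"
    by (simp add: add.commute)
  also have "\<dots> = (\<Sum>m<Suc n. h m)"
    by (rule sum.lessThan_Suc_shift[symmetric])
  finally show ?thesis using k by simp
qed

lemma quad_form_cycle_ge:
  fixes N :: "nat \<Rightarrow> nat \<Rightarrow> real" and x :: "nat \<Rightarrow> real"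
  assumes "3 \<le> k"
    and diag: "\<And>m. m < k \<Longrightarrow> N m m = 1"
    and succ: "\<And>m. m < k \<Longrightarrow> N m ((m + 1) mod k) = 1/2"
    and pred: "\<And>m. m < k \<Longrightarrow> N ((m + 1) mod k) m = 1/2"
    and nonneg: "\<And>m m'. m < k \<Longrightarrow> m' < k \<Longrightarrow> 0 \<le> N m m' * x m * x m'"
  shows "(\<Sum>m<k. x m)\<^sup>2 / (real k / 2) \<le> quad_form N {..<k} x"
proof -
  define sc where "sc m = (m + 1) mod k" for m
  define G where "G = (\<lambda>(m, m'). N m m' * x m * x m')"
  have sc_less: "sc m < k" for m
    using assms(1) by (simp add: sc_def)
  have sc_ne: "sc m \<noteq> m" and sc_sc_ne: "sc (sc m) \<noteq> m" if "m < k" for m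
    using that assms(1) by (auto simp: sc_def mod_if)
  \<comment> \<open>keep the diagonal and both orientations of every cycle edge; the dropped terms are \<open>\<ge> 0\<close>\<close>
  define P0 P1 P2 where "P0 = (\<lambda>m. (m, m)) ` {..<k}" and "P1 = (\<lambda>m. (m, sc m)) ` {..<k}"
    and "P2 = (\<lambda>m. (sc m, m)) ` {..<k}"
  have disjoint: "P0 \<inter> P1 = {}" "(P0 \<union> P1) \<inter> P2 = {}"
    using sc_ne sc_sc_ne by (fastforce simp: P0_def P1_def P2_def)+
  have "P0 \<union> P1 \<union> P2 \<subseteq> {..<k} \<times> {..<k}"
    using sc_less by (auto simp: P0_def P1_def P2_def)
  then have "sum G (P0 \<union> P1 \<union> P2) \<le> sum G ({..<k} \<times> {..<k})"
    by (intro sum_mono2) (auto simp: G_def nonneg)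
  also have "\<dots> = quad_form N {..<k} x"
    by (simp add: quad_form_def G_def sum.cartesian_product)
  finally have "sum G P0 + sum G P1 + sum G P2 \<le> quad_form N {..<k} x"
    using disjoint by (simp add: P0_def P1_def P2_def sum.union_disjoint)
  moreover have "sum G P0 = (\<Sum>m<k. (x m)\<^sup>2)"
    by (simp add: P0_def G_def sum.reindex inj_on_def diag power2_eq_square)
  moreover have "sum G P1 = (\<Sum>m<k. x m * x (sc m)) / 2"
    by (simp add: P1_def G_def sum.reindex inj_on_def sum_divide_distrib)
      (intro sum.cong; simp add: succ[simplified] sc_def)
  moreover have "sum G P2 = (\<Sum>m<k. x m * x (sc m)) / 2"
    by (simp add: P2_def G_def sum.reindex inj_on_def sum_divide_distrib)
      (intro sum.cong; simp add: pred[simplified] sc_def)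
  ultimately have lower: "(\<Sum>m<k. (x m)\<^sup>2 + x m * x (sc m)) \<le> quad_form N {..<k} x"
    by (simp add: sum.distrib)
  have "(\<Sum>m<k. x m)\<^sup>2 / (real k / 2) = (\<Sum>m<k. x m + x (sc m))\<^sup>2 / real k / 2"
    using sum_lessThan_rotate[of k x] assms(1) by (simp add: sc_def sum.distrib power2_eq_square)
  also have "\<dots> \<le> (\<Sum>m<k. (x m + x (sc m))\<^sup>2) / 2"
    using titu_inequality[of "{..<k}" "\<lambda>_. 1"] by simp
  also have "\<dots> = (\<Sum>m<k. (x m)\<^sup>2 + x m * x (sc m))"
    using sum_lessThan_rotate[of k "\<lambda>m. (x m)\<^sup>2"] assms(1)
    by (simp add: sc_def power2_sum sum.distrib sum_divide_distrib[symmetric] mult.assoc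
        sum_distrib_left[symmetric])
  finally show ?thesis using lower by simp
qed

lemma quad_form_reindex:
  assumes "bij_betw f T S"
  shows "quad_form M S u = quad_form (\<lambda>i j. M (f i) (f j)) T (u \<circ> f)"
  unfolding quad_form_def by (simp add: sum.reindex_bij_betw[OF assms, symmetric])

lemma inverse_sum_weights_le_quad_form:
  fixes B :: "'i \<Rightarrow> 'a set" and M :: "'a \<Rightarrow> 'a \<Rightarrow> real"
  assumes "finite I" "finite A" and disj: "disjoint_family_on B I" and cover: "(\<Union>i\<in>I. B i) = A"
    and w_pos: "\<And>i. i \<in> I \<Longrightarrow> 0 < w i"
    and block: "\<And>i. i \<in> I \<Longrightarrow> (\<Sum>a\<in>B i. u a)\<^sup>2 / w i \<le> quad_form M (B i) u"
    and nonneg: "\<And>a b. a \<in> A \<Longrightarrow> b \<in> A \<Longrightarrow> 0 \<le> M a b * u a * u b"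
    and "(\<Sum>a\<in>A. u a) = 1"
  shows "1 / (\<Sum>i\<in>I. w i) \<le> quad_form M A u"
proof -
  have fin_B: "\<forall>i\<in>I. finite (B i)"
    using cover \<open>finite A\<close> by (auto intro: finite_subset)
  have sum_blocks: "(\<Sum>a\<in>A. g a) = (\<Sum>i\<in>I. \<Sum>a\<in>B i. g a)" for g :: "'a \<Rightarrow> real"
    using sum.UNION_disjoint_family[OF \<open>finite I\<close> fin_B disj] cover by simp
  have "(\<Sum>i\<in>I. \<Sum>a\<in>B i. u a) = 1"
    using sum_blocks assms(8) by simp
  then have "1 / (\<Sum>i\<in>I. w i) = (\<Sum>i\<in>I. \<Sum>a\<in>B i. u a)\<^sup>2 / (\<Sum>i\<in>I. w i)"
    by simp
  also have "\<dots> \<le> (\<Sum>i\<in>I. (\<Sum>a\<in>B i. u a)\<^sup>2 / w i)"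
    using w_pos by (intro titu_inequality \<open>finite I\<close>) (auto simp: less_le)
  also have "\<dots> \<le> (\<Sum>i\<in>I. quad_form M (B i) u)"
    by (intro sum_mono block)
  also have "\<dots> \<le> (\<Sum>i\<in>I. \<Sum>a\<in>B i. \<Sum>b\<in>A. M a b * u a * u b)"
    unfolding quad_form_def using fin_B cover nonneg \<open>finite A\<close>
    by (intro sum_mono sum_mono2) auto
  also have "\<dots> = quad_form M A u"
    unfolding quad_form_def by (simp add: sum_blocks)
  finally show ?thesis .
qed

definition complement_weight :: "(nat \<Rightarrow> nat \<Rightarrow> real) \<Rightarrow> nat \<Rightarrow> nat \<Rightarrow> real" where
  "complement_weight \<omega> a b = (if a = b then 1 else 1 - \<omega> a b)"

lemma complement_weight_nonneg:
  assumes "weighted_complete t \<omega>" "a \<in> {1..t}" "b \<in> {1..t}"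
  shows "0 \<le> complement_weight \<omega> a b"
proof (cases "a = b")
  case False
  then have "\<omega> a b \<in> {1/2, 1}"
    using assms unfolding weighted_complete_def by blast
  then show ?thesis by (auto simp: complement_weight_def)
qed (simp add: complement_weight_def)

lemma sum_pairs_symmetric:
  fixes W :: "nat \<Rightarrow> nat \<Rightarrow> real"
  assumes "finite A" and sym: "\<And>a b. a \<in> A \<Longrightarrow> b \<in> A \<Longrightarrow> W a b = W b a"
  shows "(\<Sum>a\<in>A. \<Sum>b\<in>A. W a b)
    = 2 * (\<Sum>a\<in>A. \<Sum>b\<in>A. if a < b then W a b else 0) + (\<Sum>a\<in>A. W a a)"
proof -
  have split: "W a b = (if a < b then W a b else 0) + (if b < a then W a b else 0)
      + (if a = b then W a b else 0)" for a b
    by auto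
  have "(\<Sum>a\<in>A. \<Sum>b\<in>A. if b < a then W a b else 0) = (\<Sum>b\<in>A. \<Sum>a\<in>A. if b < a then W b a else 0)"
    by (subst sum.swap) (intro sum.cong refl; simp add: sym)
  then show ?thesis
    using \<open>finite A\<close> by (subst split) (simp add: sum.distrib)
qed

lemma quad_form_complement_weight:
  assumes "weighted_complete t \<omega>" and "(\<Sum>a\<in>{1..t}. u a) = 1"
  shows "quad_form (complement_weight \<omega>) {1..t} u = 1 - 2 * edge_poly t \<omega> u"
proof -
  define W where "W a b = (if a = b then 0 else \<omega> a b * u a * u b)" for a b
  have "quad_form (complement_weight \<omega>) {1..t} u
      = (\<Sum>a\<in>{1..t}. \<Sum>b\<in>{1..t}. u a * u b) - (\<Sum>a\<in>{1..t}. \<Sum>b\<in>{1..t}. W a b)"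
    unfolding quad_form_def sum_subtractf[symmetric]
    by (intro sum.cong refl) (simp add: complement_weight_def W_def algebra_simps)
  moreover have "(\<Sum>a\<in>{1..t}. \<Sum>b\<in>{1..t}. u a * u b) = 1"
    using assms(2) by (simp add: sum_product[symmetric])
  moreover have "(\<Sum>a\<in>{1..t}. \<Sum>b\<in>{1..t}. W a b)
      = 2 * (\<Sum>a\<in>{1..t}. \<Sum>b\<in>{1..t}. if a < b then W a b else 0)"
    using assms(1) by (subst sum_pairs_symmetric) (auto simp: W_def weighted_complete_def)
  moreover have "(\<Sum>a\<in>{1..t}. \<Sum>b\<in>{1..t}. if a < b then W a b else 0) = edge_poly t \<omega> u"
    unfolding edge_poly_def
  proof (rule sum.cong[OF refl])
    fix a
    have "{b \<in> {1..t}. a < b} = {a + 1..t}" by auto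
    then show "(\<Sum>b\<in>{1..t}. if a < b then W a b else 0) = (\<Sum>b\<in>{a + 1..t}. \<omega> a b * u a * u b)"
      by (simp add: sum.inter_filter[symmetric] W_def)
  qed
  ultimately show ?thesis by simp
qed

definition admissible_block :: "nat \<Rightarrow> (nat \<Rightarrow> nat \<Rightarrow> real) \<Rightarrow> nat set \<Rightarrow> real \<Rightarrow> bool" where
  "admissible_block t \<omega> S w \<longleftrightarrow> S \<subseteq> {1..t} \<and> 0 < w \<and>
     (\<forall>u. (\<forall>a\<in>S. 0 \<le> u a) \<longrightarrow>
        (\<Sum>a\<in>S. u a)\<^sup>2 / w \<le> quad_form (complement_weight \<omega>) S u)"

lemma admissible_half_cycle:
  assumes wc: "weighted_complete t \<omega>" and "half_cycle t \<omega> k c" and "3 \<le> k"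
  shows "admissible_block t \<omega> (set c) (real k / 2)"
proof -
  have len: "length c = k" and "distinct c" and sub: "set c \<subseteq> {1..t}"
    and half: "\<And>m. m < k \<Longrightarrow> \<omega> (c ! m) (c ! ((m + 1) mod k)) = 1/2"
    using assms(2) by (auto simp: half_cycle_def half_edge_def)
  have bij: "bij_betw ((!) c) {..<k} (set c)"
    using bij_betw_nth[OF \<open>distinct c\<close>] len by (simp add: atLeast0LessThan)
  have nth_in: "c ! m \<in> {1..t}" if "m < k" for m
    using that len sub nth_mem by blast
  have ne: "c ! m \<noteq> c ! ((m + 1) mod k)" if "m < k" for m
    using that \<open>distinct c\<close> len \<open>3 \<le> k\<close> by (simp add: nth_eq_iff_index_eq mod_if)
  define N where "N = (\<lambda>i j. complement_weight \<omega> (c ! i) (c ! j))"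
  have "(\<Sum>a\<in>set c. u a)\<^sup>2 / (real k / 2) \<le> quad_form (complement_weight \<omega>) (set c) u"
    if "\<forall>a\<in>set c. 0 \<le> u a" for u
  proof -
    have "(\<Sum>m<k. (u \<circ> (!) c) m)\<^sup>2 / (real k / 2) \<le> quad_form N {..<k} (u \<circ> (!) c)"
    proof (rule quad_form_cycle_ge[OF \<open>3 \<le> k\<close>])
      fix m m' assume "m < k"
      moreover have "(m + 1) mod k < k"
        using \<open>3 \<le> k\<close> by simp
      ultimately have "\<omega> (c ! ((m + 1) mod k)) (c ! m) = \<omega> (c ! m) (c ! ((m + 1) mod k))"
        using wc ne nth_in unfolding weighted_complete_def by metis
      with \<open>m < k\<close> show "N m m = 1" "N m ((m + 1) mod k) = 1/2" "N ((m + 1) mod k) m = 1/2"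
        using half ne[OF \<open>m < k\<close>] ne[OF \<open>m < k\<close>, symmetric]
        by (auto simp: N_def complement_weight_def)
      assume "m' < k"
      then show "0 \<le> N m m' * (u \<circ> (!) c) m * (u \<circ> (!) c) m'"
        using \<open>m < k\<close> that nth_in len wc
        by (simp add: N_def complement_weight_nonneg)
    qed
    then show ?thesis
      by (simp add: quad_form_reindex[OF bij] N_def sum.reindex_bij_betw[OF bij, symmetric])
  qed
  then show ?thesis
    using sub \<open>3 \<le> k\<close> by (simp add: admissible_block_def)
qed

lemma admissible_half_clique:
  assumes "half_clique t \<omega> k S" and "1 \<le> k"
  shows "admissible_block t \<omega> S (2 * real k / (real k + 1))"
proof -
  have "card S = k" and sub: "S \<subseteq> {1..t}"
    and half: "\<And>a b. a \<in> S \<Longrightarrow> b \<in> S \<Longrightarrow> a \<noteq> b \<Longrightarrow> \<omega> a b = 1/2"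
    using assms(1) by (auto simp: half_clique_def half_edge_def)
  then have "(\<Sum>a\<in>S. u a)\<^sup>2 / (2 * real k / (real k + 1))
      \<le> quad_form (complement_weight \<omega>) S u" for u
    using quad_form_clique_ge[of S "complement_weight \<omega>"] finite_subset[OF sub]
    by (simp add: complement_weight_def)
  then show ?thesis
    using sub \<open>1 \<le> k\<close> by (simp add: admissible_block_def)
qed

lemma admissible_half_cycles:
  assumes "weighted_complete t \<omega>" "\<forall>c\<in>set cs. half_cycle t \<omega> k c" "3 \<le> k"
  shows "\<forall>(S, w)\<in>set (map (\<lambda>c. (set c, real k / 2)) cs). admissible_block t \<omega> S w"
  using assms admissible_half_cycle by auto

lemma admissible_half_cliques:
  assumes "\<forall>S\<in>set Ss. half_clique t \<omega> k S" "1 \<le> k"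
  shows "\<forall>(S, w)\<in>set (map (\<lambda>S. (S, 2 * real k / (real k + 1))) Ss). admissible_block t \<omega> S w"
  using assms admissible_half_clique by auto

lemma admissible_singleton:
  assumes "a \<in> {1..t}"
  shows "admissible_block t \<omega> {a} 1"
  using assms by (simp add: admissible_block_def quad_form_def complement_weight_def power2_eq_square)

lemma edge_density_le:
  assumes "1 \<le> t" and "\<And>u. u \<in> simplex t \<Longrightarrow> edge_poly t \<omega> u \<le> c"
  shows "edge_density t \<omega> \<le> c"
  unfolding edge_density_def
proof (rule cSup_least)
  have "(\<lambda>i. if i = 1 then 1 else 0) \<in> simplex t"
    using assms(1) by (simp add: simplex_def)
  then show "edge_poly t \<omega> ` simplex t \<noteq> {}" by blast
qed (use assms(2) in blast)

lemma real_card_Diff_UN_disjoint: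
  assumes "finite A" "disjoint_family_on B I" "finite I" "\<And>i. i \<in> I \<Longrightarrow> B i \<subseteq> A"
  shows "real (card (A - (\<Union>i\<in>I. B i))) = real (card A) - (\<Sum>i\<in>I. real (card (B i)))"
proof -
  have sub: "(\<Union>i\<in>I. B i) \<subseteq> A"
    using assms(4) by auto
  have "card (\<Union>i\<in>I. B i) = (\<Sum>i\<in>I. card (B i))"
    using assms by (intro card_UN_disjoint') (auto intro: finite_subset)
  moreover have "card (\<Union>i\<in>I. B i) \<le> card A"
    using card_mono[OF \<open>finite A\<close> sub] .
  ultimately show ?thesis
    using sub \<open>finite A\<close> by (simp add: card_Diff_subset finite_subset of_nat_diff)
qed

lemma disjoint_family_on_add_singletons:
  assumes disj: "disjoint_family_on B I" and sub: "\<And>i. i \<in> I \<Longrightarrow> B i \<subseteq> A"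
  defines "R \<equiv> A - (\<Union>i\<in>I. B i)"
  shows "disjoint_family_on (case_sum B (\<lambda>a. {a})) (I <+> R)"
    and "(\<Union>j\<in>I <+> R. case_sum B (\<lambda>a. {a}) j) = A"
proof -
  show "disjoint_family_on (case_sum B (\<lambda>a. {a})) (I <+> R)"
    unfolding disjoint_family_on_def
  proof (intro ballI impI)
    fix j j' assume "j \<in> I <+> R" "j' \<in> I <+> R" "j \<noteq> j'"
    then show "case_sum B (\<lambda>a. {a}) j \<inter> case_sum B (\<lambda>a. {a}) j' = {}"
      using disjoint_family_onD[OF disj] by (elim PlusE) (auto simp: R_def)
  qed
  have "(\<Union>j\<in>I <+> R. case_sum B (\<lambda>a. {a}) j) = (\<Union>i\<in>I. B i) \<union> R"
    by (auto simp: Plus_def)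
  then show "(\<Union>j\<in>I <+> R. case_sum B (\<lambda>a. {a}) j) = A"
    using sub by (auto simp: R_def)
qed

lemma inverse_sum_weights_le_edge_poly:
  assumes wc: "weighted_complete t \<omega>" and "finite I" and "disjoint_family_on B I"
    and "(\<Union>i\<in>I. B i) = {1..t}" and adm: "\<And>i. i \<in> I \<Longrightarrow> admissible_block t \<omega> (B i) (w i)"
    and u: "u \<in> simplex t"
  shows "1 / (\<Sum>i\<in>I. w i) \<le> 1 - 2 * edge_poly t \<omega> u"
proof -
  have "1 / (\<Sum>i\<in>I. w i) \<le> quad_form (complement_weight \<omega>) {1..t} u"
  proof (rule inverse_sum_weights_le_quad_form[OF assms(2) _ assms(3,4)])
    fix i assume "i \<in> I"
    then have "admissible_block t \<omega> (B i) (w i)"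
      by (rule adm)
    moreover have "\<forall>a\<in>B i. 0 \<le> u a"
      using calculation u by (auto simp: admissible_block_def simplex_def)
    ultimately show "0 < w i" "(\<Sum>a\<in>B i. u a)\<^sup>2 / w i \<le> quad_form (complement_weight \<omega>) (B i) u"
      by (simp_all add: admissible_block_def)
  qed (use u wc in \<open>auto simp: simplex_def complement_weight_nonneg\<close>)
  then show ?thesis
    using quad_form_complement_weight[OF wc] u by (simp add: simplex_def)
qed

lemma edge_density_le_blocks:
  fixes BL :: "(nat set \<times> real) list"
  assumes "1 \<le> t" and wc: "weighted_complete t \<omega>"
    and adm: "\<forall>(S, w)\<in>set BL. admissible_block t \<omega> S w"
    and disj: "\<forall>i<length BL. \<forall>j<length BL. i \<noteq> j \<longrightarrow> fst (BL ! i) \<inter> fst (BL ! j) = {}"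
  shows "2 * edge_density t \<omega> \<le> 1 - 1 / (real t - (\<Sum>(S, w)\<leftarrow>BL. real (card S) - w))"
proof -
  define n where "n = length BL"
  define B W where "B i = fst (BL ! i)" and "W i = snd (BL ! i)" for i
  define R where "R = {1..t} - (\<Union>i<n. B i)"
  have adm_B: "admissible_block t \<omega> (B i) (W i)" if "i < n" for i
    using adm nth_mem[of i BL] that by (auto simp: B_def W_def n_def)
  then have B_sub: "B i \<subseteq> {1..t}" if "i \<in> {..<n}" for i
    using that by (simp add: admissible_block_def)
  have disj_B: "disjoint_family_on B {..<n}"
    using disj by (auto simp: disjoint_family_on_def B_def n_def)
  \<comment> \<open>the vertices outside all blocks become singleton blocks of weight 1\<close>
  define B' W' where "B' = case_sum B (\<lambda>a. {a})" and "W' = case_sum W (\<lambda>_ :: nat. 1 :: real)"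
  have "(\<Sum>i\<in>{..<n} <+> R. W' i) = real t - (\<Sum>(S, w)\<leftarrow>BL. real (card S) - w)"
  proof -
    have "(\<Sum>(S, w)\<leftarrow>BL. real (card S) - w) = (\<Sum>i<n. real (card (B i)) - W i)"
      by (simp add: sum_list_sum_nth atLeast0LessThan n_def B_def W_def case_prod_beta)
    then show ?thesis
      using real_card_Diff_UN_disjoint[OF _ disj_B _ B_sub]
      by (simp add: W'_def R_def sum.Plus sum_subtractf)
  qed
  moreover have "1 / (\<Sum>i\<in>{..<n} <+> R. W' i) \<le> 1 - 2 * edge_poly t \<omega> u" if "u \<in> simplex t" for u
    using disjoint_family_on_add_singletons[OF disj_B B_sub] adm_B admissible_singleton
    by (intro inverse_sum_weights_le_edge_poly[OF wc _ _ _ _ that])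
      (auto simp: B'_def W'_def R_def)
  ultimately have "edge_poly t \<omega> u \<le> (1 - 1 / (real t - (\<Sum>(S, w)\<leftarrow>BL. real (card S) - w))) / 2"
    if "u \<in> simplex t" for u
    using that by fastforce
  then have "edge_density t \<omega> \<le> (1 - 1 / (real t - (\<Sum>(S, w)\<leftarrow>BL. real (card S) - w))) / 2"
    by (rule edge_density_le[OF \<open>1 \<le> t\<close>])
  then show ?thesis by simp
qed

lemma sum_list_card_half_cycles:
  assumes "\<forall>c\<in>set cs. half_cycle t \<omega> k c"
  shows "(\<Sum>c\<leftarrow>cs. real (card (set c)) - w) = real (length cs) * (real k - w)"
  using assms by (induction cs) (auto simp: half_cycle_def distinct_card algebra_simps)

lemma sum_list_card_half_cliques:
  assumes "\<forall>S\<in>set Ss. half_clique t \<omega> k S"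
  shows "(\<Sum>S\<leftarrow>Ss. real (card S) - w) = real (length Ss) * (real k - w)"
  using assms by (induction Ss) (auto simp: half_clique_def algebra_simps)

theorem mainTheorem7:
  fixes t :: nat and \<omega> :: "nat \<Rightarrow> nat \<Rightarrow> real"
    and C8s C5s C4s :: "nat list list"
    and K5s K4s K3s Es :: "nat set list"
  assumes "t \<ge> 1"
    and "weighted_complete t \<omega>"
    and "\<forall>c\<in>set C8s. half_cycle t \<omega> 8 c"
    and "\<forall>S\<in>set K5s. half_clique t \<omega> 5 S"
    and "\<forall>c\<in>set C5s. half_cycle t \<omega> 5 c"
    and "\<forall>S\<in>set K4s. half_clique t \<omega> 4 S"
    and "\<forall>c\<in>set C4s. half_cycle t \<omega> 4 c"
    and "\<forall>S\<in>set K3s. half_clique t \<omega> 3 S"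
    and "\<forall>S\<in>set Es. half_clique t \<omega> 2 S"
    and "let V = map set C8s @ K5s @ map set C5s @ K4s @ map set C4s @ K3s @ Es in
           \<forall>i<length V. \<forall>j<length V. i \<noteq> j \<longrightarrow> V ! i \<inter> V ! j = {}"
  shows "2 * edge_density t \<omega> \<le> 1 - 30 / (30 * real t - 120 * real (length C8s)
           - 100 * real (length K5s) - 75 * real (length C5s) - 72 * real (length K4s)
           - 60 * real (length C4s) - 45 * real (length K3s) - 20 * real (length Es))"
proof -
  define cyc where "cyc k = (\<lambda>c :: nat list. (set c, real k / 2))" for k :: nat
  define clq where "clq k = (\<lambda>S :: nat set. (S, 2 * real k / (real k + 1)))" for k :: nat
  define BL where "BL = map (cyc 8) C8s @ map (clq 5) K5s @ map (cyc 5) C5s @ map (clq 4) K4s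
    @ map (cyc 4) C4s @ map (clq 3) K3s @ map (clq 2) Es"
  have adm: "\<forall>(S, w)\<in>set BL. admissible_block t \<omega> S w"
    using admissible_half_cycles[OF assms(2,3)] admissible_half_cycles[OF assms(2,5)]
      admissible_half_cycles[OF assms(2,7)] admissible_half_cliques[OF assms(4)]
      admissible_half_cliques[OF assms(6)] admissible_half_cliques[OF assms(8)]
      admissible_half_cliques[OF assms(9)]
    by (auto simp: BL_def cyc_def clq_def)
  have "map fst BL = map set C8s @ K5s @ map set C5s @ K4s @ map set C4s @ K3s @ Es"
    by (simp add: BL_def cyc_def clq_def comp_def)
  then have disj: "\<forall>i<length BL. \<forall>j<length BL. i \<noteq> j \<longrightarrow> fst (BL ! i) \<inter> fst (BL ! j) = {}"
    using assms(10) unfolding Let_def by (metis length_map nth_map)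
  define d where "d = real t - (\<Sum>(S, w)\<leftarrow>BL. real (card S) - w)"
  have "2 * edge_density t \<omega> \<le> 1 - 1 / d"
    using edge_density_le_blocks[OF assms(1,2) adm disj] by (simp add: d_def)
  moreover have "30 * real t - 120 * real (length C8s) - 100 * real (length K5s)
      - 75 * real (length C5s) - 72 * real (length K4s) - 60 * real (length C4s)
      - 45 * real (length K3s) - 20 * real (length Es) = 30 * d"
    using sum_list_card_half_cycles[OF assms(3), of "real 8 / 2"]
      sum_list_card_half_cycles[OF assms(5), of "real 5 / 2"]
      sum_list_card_half_cycles[OF assms(7), of "real 4 / 2"]
      sum_list_card_half_cliques[OF assms(4), of "2 * real 5 / (real 5 + 1)"]
      sum_list_card_half_cliques[OF assms(6), of "2 * real 4 / (real 4 + 1)"]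
      sum_list_card_half_cliques[OF assms(8), of "2 * real 3 / (real 3 + 1)"]
      sum_list_card_half_cliques[OF assms(9), of "2 * real 2 / (real 2 + 1)"]
    by (simp add: d_def BL_def cyc_def clq_def comp_def)
  ultimately show ?thesis
    by simp
qed

end
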